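(* Let $\{X_n;n\ge1\}$ be a sequence of independent non-negative random variables with absolutely continuous distribution functions $F_n$ satisfying $\overline F_n(t)>0$ for all $t\ge 0$. Let $\{T_n\}$ be the failure times of the relevation process based on $\{F_n\}$ and $\{T'_n\}$ the failure times of the replacement-by-a-new-unit process based on $\{X_n\}$. If $X_i$ is IFR for all $i\ge1$, then $(T'_1,\ldots,T'_n)\ge_{\mathrm{dyn\text{-}hr}}(T_1,\ldots,T_n)$ for all $n\ge1$. If $X_i$ is DFR for all $i\ge1$, then $(T'_1,\ldots,T'_n)\le_{\mathrm{dyn\text{-}hr}}(T_1,\ldots,T_n)$ for all $n\ge1$.
   Context: Relevation process based on $\{F_n\}$: random times $0<T_1<T_2<\cdots$ with $T_1\sim F_1$ and, for $i\ge2$, conditionally on $T_1=t_1,\ldots,T_{i-1}=t_{i-1}$ ($0<t_1<\cdots<t_{i-1}$), $P(T_i>t\mid\cdot)=\overline F_i(t)/\overline F_i(t_{i-1})$ for $t\ge t_{i-1}$. Replacement-by-a-new-unit process: $T'_n=X_1+\cdots+X_n$. $X$ is IFR [DFR] if its hazard rate $f/\overline F$ is increasing [decreasing]. Multivariate dynamic hazard rate order: for a non-negative continuous random vector $\mathbf X=(X_1,\ldots,X_n)$ and $t\ge0$, a history is $h_t=\{\mathbf X_I=\mathbf x_I,\ \mathbf X_{\overline I}>t\mathbf e\}$ with $I\subseteq\{1,\ldots,n\}$, $\overline I$ its complement, $0<x_i<t$ for $i\in I$, $\mathbf e$ a vector of ones. For $j\in\overline I$, $\eta_j(t\mid h_t)=\lim_{\Delta\to0^+}\Delta^{-1}P(t<X_j\le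 t+\Delta\mid h_t)$. Given $\mathbf X,\mathbf Y$ with such functions $\eta$ and $\lambda$, $\mathbf X\le_{\mathrm{dyn\text{-}hr}}\mathbf Y$ means $\eta_k(t\mid h_t)\ge\lambda_k(t\mid h'_t)$ for all $t\ge0$, all histories $h_t=\{\mathbf X_{I\cup J}=\mathbf x_{I\cup J},\mathbf X_{\overline{I\cup J}}>t\mathbf e\}$ and $h'_t=\{\mathbf Y_I=\mathbf y_I,\mathbf Y_{\overline I}>t\mathbf e\}$ with $I\cap J=\emptyset$, $\mathbf 0\le\mathbf x_I\le\mathbf y_I\le t\mathbf e$, $\mathbf 0\le \mathbf x_J\le t\mathbf e$, and all $k\in\overline{I\cup J}$. *)

theory Defs
  imports "HOL-Analysis.Analysis"
begin

text \<open>Lifetime distributions. f n is the density of X_n (n >= 1); the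
distribution function F_n is absolutely continuous with density f n.\<close>

definition survival :: "(real \<Rightarrow> real) \<Rightarrow> real \<Rightarrow> real" where
  "survival g t = (LINT x:{t<..}|lborel. g x)"

definition is_lifetime_density :: "(real \<Rightarrow> real) \<Rightarrow> bool" where
  "is_lifetime_density g \<longleftrightarrow>
     g \<in> borel_measurable lborel \<and> (\<forall>x. 0 \<le> g x) \<and> (\<forall>x<0. g x = 0) \<and>
     integrable lborel g \<and> (LINT x|lborel. g x) = 1"

definition IFR :: "(real \<Rightarrow> real) \<Rightarrow> bool" where
  "IFR g \<longleftrightarrow> mono_on {0..} (\<lambda>t. g t / survival g t)"

definition DFR :: "(real \<Rightarrow> real) \<Rightarrow> bool" where
  "DFR g \<longleftrightarrow> antimono_on {0..} (\<lambda>t. g t / survival g t)"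

text \<open>Vectors in R^n are functions nat => real, coordinates 1..n.
Joint density of (T_1,...,T_n) for the relevation process: T_1 has density
f_1 and, given T_1..T_{i-1}, T_i has density f_i(t)/Fbar_i(t_{i-1}) on
t > t_{i-1}.\<close>

definition relevation_density ::
  "(nat \<Rightarrow> real \<Rightarrow> real) \<Rightarrow> nat \<Rightarrow> (nat \<Rightarrow> real) \<Rightarrow> real" where
  "relevation_density f n t =
     (if 0 < t 1 \<and> (\<forall>i\<in>{2..n}. t (i - 1) < t i)
      then f 1 (t 1) * (\<Prod>i\<in>{2..n}. f i (t i) / survival (f i) (t (i - 1)))
      else 0)"

text \<open>Joint density of (T'_1,...,T'_n), T'_i = X_1 + ... + X_i with
X_1, X_2, ... independent, X_i having density f_i (with T'_0 = 0).\<close>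

definition replacement_density ::
  "(nat \<Rightarrow> real \<Rightarrow> real) \<Rightarrow> nat \<Rightarrow> (nat \<Rightarrow> real) \<Rightarrow> real" where
  "replacement_density f n t =
     (if 0 < t 1 \<and> (\<forall>i\<in>{2..n}. t (i - 1) < t i)
      then f 1 (t 1) * (\<Prod>i\<in>{2..n}. f i (t i - t (i - 1)))
      else 0)"

text \<open>Conditional quantities for a random vector with joint density g on R^n
(coordinates 1..n), given the history
  h_t = {X_I = x_I, X_j > t for j not in I}.\<close>

definition hist_denom ::
  "((nat \<Rightarrow> real) \<Rightarrow> real) \<Rightarrow> nat \<Rightarrow> real \<Rightarrow> nat set \<Rightarrow> (nat \<Rightarrow> real) \<Rightarrow> real" where
  "hist_denom g n t I x =
     (LINT y|PiM ({1..n} - I) (\<lambda>_. lborel).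
        indicator {y. \<forall>j\<in>{1..n} - I. t < y j} y * g (\<lambda>i. if i \<in> I then x i else y i))"

definition hist_numer ::
  "((nat \<Rightarrow> real) \<Rightarrow> real) \<Rightarrow> nat \<Rightarrow> real \<Rightarrow> nat set \<Rightarrow> (nat \<Rightarrow> real) \<Rightarrow> nat \<Rightarrow> real" where
  "hist_numer g n t I x k =
     (LINT y|PiM ({1..n} - I - {k}) (\<lambda>_. lborel).
        indicator {y. \<forall>j\<in>{1..n} - I - {k}. t < y j} y *
        g (\<lambda>i. if i \<in> I then x i else if i = k then t else y i))"

text \<open>Multivariate conditional hazard rate eta_k(t | h_t)
 = lim (1/Delta) P(t < X_k <= t + Delta | h_t), expressed through the joint
density as (conditional density of X_k at t) / P(X_j > t, j not in I | X_I = x_I).\<close>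

definition mv_hazard ::
  "((nat \<Rightarrow> real) \<Rightarrow> real) \<Rightarrow> nat \<Rightarrow> real \<Rightarrow> nat set \<Rightarrow> (nat \<Rightarrow> real) \<Rightarrow> nat \<Rightarrow> real" where
  "mv_hazard g n t I x k = hist_numer g n t I x k / hist_denom g n t I x"

definition history :: "((nat \<Rightarrow> real) \<Rightarrow> real) \<Rightarrow> nat \<Rightarrow> real \<Rightarrow> nat set \<Rightarrow> (nat \<Rightarrow> real) \<Rightarrow> bool" where
  "history g n t I x \<longleftrightarrow> I \<subseteq> {1..n} \<and> (\<forall>i\<in>I. 0 < x i \<and> x i < t) \<and> 0 < hist_denom g n t I x"

definition dyn_hr_le :: "nat \<Rightarrow> ((nat \<Rightarrow> real) \<Rightarrow> real) \<Rightarrow> ((nat \<Rightarrow> real) \<Rightarrow> real) \<Rightarrow> bool" where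
  "dyn_hr_le n gX gY \<longleftrightarrow>
     (\<forall>t\<ge>0. \<forall>I J x y. I \<inter> J = {} \<and>
        history gX n t (I \<union> J) x \<and> history gY n t I y \<and>
        (\<forall>i\<in>I. 0 \<le> x i \<and> x i \<le> y i \<and> y i \<le> t) \<and> (\<forall>j\<in>J. 0 \<le> x j \<and> x j \<le> t) \<longrightarrow>
        (\<forall>k\<in>{1..n} - (I \<union> J). mv_hazard gX n t (I \<union> J) x k \<ge> mv_hazard gY n t I y k))"

end

theory Submission
  imports Defs
begin

(*
  Both failure-time vectors are Markov chains on increasing paths started at 0: their joint
  densities are products phi_1(0, t_1) phi_2(t_1, t_2) ... phi_n(t_(n-1), t_n) of transition
  densities, with phi_i(p, q) = f_i(q) / Fbar_i(p) for the relevation process and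
  phi_i(p, q) = f_i(q - p) for the replacement process (q > p).  As paths increase, a history at
  time t of positive probability records exactly the first m failures; the multivariate hazard of
  component k is then 0 for k > m + 1, and for k = m + 1 it is the hazard at t of phi_(m+1)(x_m, -).
  That hazard is r_(m+1)(t) for relevation, whatever x_m, and r_(m+1)(t - x_m) for replacement,
  where r_i is the hazard rate of X_i.  Against a finer history, the hazard given the coarser one
  can only be positive when both record the same failures, and then IFR gives
  r(t - y_m) <= r(t), DFR gives r(t) <= r(t - x_m).
*)

section \<open>Path densities of transition kernels\<close>

definition splice_path :: "nat \<Rightarrow> (nat \<Rightarrow> real) \<Rightarrow> (nat \<Rightarrow> real) \<Rightarrow> nat \<Rightarrow> real" where
  "splice_path a w y i = (if i < a then w i else y i)"

definition path_density :: "(nat \<Rightarrow> real \<Rightarrow> real \<Rightarrow> real) \<Rightarrow> nat \<Rightarrow> (nat \<Rightarrow> real) \<Rightarrow> real" where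
  "path_density \<phi> n z = (\<Prod>i\<in>{1..n}. \<phi> i (z (i - 1)) (z i))"

(* The integrand of the joint survival beyond t of coordinates a..n, the path before a being w. *)
definition tail_density ::
  "(nat \<Rightarrow> real \<Rightarrow> real \<Rightarrow> real) \<Rightarrow> nat \<Rightarrow> nat \<Rightarrow> real \<Rightarrow> (nat \<Rightarrow> real) \<Rightarrow> (nat \<Rightarrow> real) \<Rightarrow> real" where
  "tail_density \<phi> a n t w y = indicator {y. \<forall>j\<in>{a..n}. t < y j} y *
      (\<Prod>i\<in>{a..n}. \<phi> i (splice_path a w y (i - 1)) (splice_path a w y i))"

definition kernel_survival :: "(nat \<Rightarrow> real \<Rightarrow> real \<Rightarrow> real) \<Rightarrow> nat \<Rightarrow> real \<Rightarrow> real \<Rightarrow> real" where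
  "kernel_survival \<phi> k p t = enn2real (\<integral>\<^sup>+u. ennreal (indicator {t<..} u * \<phi> k p u) \<partial>lborel)"

definition kernel_hazard :: "(nat \<Rightarrow> real \<Rightarrow> real \<Rightarrow> real) \<Rightarrow> nat \<Rightarrow> real \<Rightarrow> real \<Rightarrow> real" where
  "kernel_hazard \<phi> k p t = \<phi> k p t / kernel_survival \<phi> k p t"

lemma ex_nonzero_if_integral_nonzero:
  fixes h :: "'a \<Rightarrow> real"
  assumes "integral\<^sup>L M h \<noteq> 0"
  shows "\<exists>y. h y \<noteq> 0"
proof (rule ccontr)
  assume "\<not> ?thesis"
  then have "h = (\<lambda>_. 0)" by auto
  with assms show False by simp
qed

lemma initial_segment_if_less_complement:
  fixes I :: "nat set"
  assumes "I \<subseteq> {1..n}" and less: "\<And>i j. i \<in> I \<Longrightarrow> j \<in> {1..n} - I \<Longrightarrow> i < j"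
  obtains m where "m \<le> n" "I = {1..m}"
proof -
  define m where "m = (if I = {} then 0 else Max I)"
  have "finite I" using assms(1) finite_subset by blast
  with assms(1) have "m \<le> n" "I \<subseteq> {1..m}" by (auto simp: m_def)
  moreover have "{1..m} \<subseteq> I"
  proof
    fix i assume i: "i \<in> {1..m}"
    then have "I \<noteq> {}" by (auto simp: m_def)
    with \<open>finite I\<close> i have "Max I \<in> I" "i \<le> Max I" by (simp_all add: m_def)
    show "i \<in> I"
    proof (rule ccontr)
      assume "i \<notin> I"
      with i \<open>Max I \<in> I\<close> \<open>m \<le> n\<close> have "Max I < i" by (intro less) auto
      with \<open>i \<le> Max I\<close> show False by simp
    qed
  qed
  ultimately show thesis using that by blast
qed

lemma measurable_splice_path:
  assumes "j < a \<or> j \<in> K"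
  shows "(\<lambda>y. splice_path a w y j) \<in> borel_measurable (PiM K (\<lambda>_. lborel))"
  using assms by (auto simp: splice_path_def measurable_lborel2 intro: measurable_component_singleton)

lemma path_density_splice_path:
  assumes "m \<le> n"
  shows "path_density \<phi> n (splice_path (Suc m) w y) =
           path_density \<phi> m w *
           (\<Prod>i\<in>{Suc m..n}. \<phi> i (splice_path (Suc m) w y (i - 1)) (splice_path (Suc m) w y i))"
proof -
  have split: "{1..n} = {1..m} \<union> {Suc m..n}" using assms by auto
  have "(\<Prod>i\<in>{1..m}. \<phi> i (splice_path (Suc m) w y (i - 1)) (splice_path (Suc m) w y i)) =
        path_density \<phi> m w"
    unfolding path_density_def by (intro prod.cong) (auto simp: splice_path_def)
  then show ?thesis unfolding path_density_def split
    by (subst prod.union_disjoint) auto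
qed

lemma path_density_cong:
  "(\<And>i. i \<le> m \<Longrightarrow> z i = z' i) \<Longrightarrow> path_density \<phi> m z = path_density \<phi> m z'"
  unfolding path_density_def by (intro prod.cong) auto

lemma path_density_Suc:
  "path_density \<phi> (Suc m) z = path_density \<phi> m z * \<phi> (Suc m) (z m) (z (Suc m))"
  by (simp add: path_density_def)

lemma path_density_from_0:
  assumes "1 \<le> n" and kernel: "\<And>i p q. 1 \<le> i \<Longrightarrow> \<phi> i p q = (if p < q then \<psi> i p q else 0)"
  shows "path_density \<phi> n (z(0 := 0)) =
    (if 0 < z 1 \<and> (\<forall>i\<in>{2..n}. z (i - 1) < z i)
     then \<psi> 1 0 (z 1) * (\<Prod>i\<in>{2..n}. \<psi> i (z (i - 1)) (z i)) else 0)"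
proof -
  have "{1..n} = insert 1 {2..n}" using assms by auto
  then have "path_density \<phi> n (z(0 := 0)) = \<phi> 1 0 (z 1) * (\<Prod>i\<in>{2..n}. \<phi> i (z (i - 1)) (z i))"
    unfolding path_density_def by simp
  also have "\<dots> = (if 0 < z 1 \<and> (\<forall>i\<in>{2..n}. z (i - 1) < z i)
     then \<psi> 1 0 (z 1) * (\<Prod>i\<in>{2..n}. \<psi> i (z (i - 1)) (z i)) else 0)"
  proof (cases "0 < z 1 \<and> (\<forall>i\<in>{2..n}. z (i - 1) < z i)")
    case True
    then show ?thesis by (auto simp: kernel intro!: prod.cong)
  next
    case False
    then show ?thesis by (auto simp: kernel intro!: prod_zero)
  qed
  finally show ?thesis .
qed

lemma tail_density_upd:
  assumes "1 \<le> a" "a \<le> n"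
  shows "tail_density \<phi> a n t w (y(a := u)) =
           indicator {t<..} u * \<phi> a (w (a - 1)) u * tail_density \<phi> (Suc a) n t (w(a := u)) y"
proof -
  have splice_path: "splice_path a w (y(a := u)) = splice_path (Suc a) (w(a := u)) y"
    by (auto simp: splice_path_def)
  have "{a..n} = insert a {Suc a..n}" using assms by auto
  then have "indicator {y. \<forall>j\<in>{a..n}. t < y j} (y(a := u)) =
        (indicator {t<..} u * indicator {y. \<forall>j\<in>{Suc a..n}. t < y j} y :: real)"
    by (auto simp: indicator_def)
  moreover have "splice_path (Suc a) (w(a := u)) y (a - 1) = w (a - 1)"
    "splice_path (Suc a) (w(a := u)) y a = u"
    using assms by (auto simp: splice_path_def)
  ultimately show ?thesis
    using assms unfolding tail_density_def splice_path by (simp add: prod.atLeast_Suc_atMost)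
qed

(* Only kernels entered after a recorded failure are integrated out, so the first one need not
   be normalised. *)
locale transition_kernels =
  fixes \<phi> :: "nat \<Rightarrow> real \<Rightarrow> real \<Rightarrow> real"
  assumes measurable_kernel: "\<And>i. (\<lambda>p. \<phi> i (fst p) (snd p)) \<in> borel_measurable borel"
    and kernel_nonneg: "\<And>i p q. 0 \<le> \<phi> i p q"
    and kernel_eq_0: "\<And>i p q. q \<le> p \<Longrightarrow> \<phi> i p q = 0"
    and nn_integral_kernel: "\<And>i p. 2 \<le> i \<Longrightarrow> 0 \<le> p \<Longrightarrow> (\<integral>\<^sup>+q. ennreal (\<phi> i p q) \<partial>lborel) = 1"
begin

lemma path_density_nonzero_increasing:
  assumes nonzero: "path_density \<phi> n z \<noteq> 0" and "i < j" "j \<le> n"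
  shows "z i < z j"
proof -
  have step: "z j < z (Suc j)" if "Suc j \<le> n" for j
  proof -
    have "\<phi> (Suc j) (z j) (z (Suc j)) \<noteq> 0"
    proof
      assume "\<phi> (Suc j) (z j) (z (Suc j)) = 0"
      with that have "path_density \<phi> n z = 0"
        unfolding path_density_def by (intro prod_zero bexI[of _ "Suc j"]) auto
      with nonzero show False ..
    qed
    then show ?thesis by (meson kernel_eq_0 not_le)
  qed
  from \<open>i < j\<close> \<open>j \<le> n\<close> show ?thesis
  proof (induction j)
    case (Suc j)
    then show ?case using step[of j] less_trans by (cases "i = j") auto
  qed simp
qed

lemma kernel_hazard_nonneg: "0 \<le> kernel_hazard \<phi> k p t"
  by (simp add: kernel_hazard_def kernel_survival_def kernel_nonneg)

lemma measurable_kernel_comp: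
  assumes "A \<in> borel_measurable M" "B \<in> borel_measurable M"
  shows "(\<lambda>y. \<phi> i (A y) (B y)) \<in> borel_measurable M"
proof -
  have "(\<lambda>y. (A y, B y)) \<in> M \<rightarrow>\<^sub>M (borel :: (real \<times> real) measure)"
    using assms by (simp add: borel_prod[symmetric])
  from measurable_compose[OF this measurable_kernel] show ?thesis by simp
qed

lemma measurable_tail_density:
  assumes "1 \<le> a"
  shows "tail_density \<phi> a n t w \<in> borel_measurable (PiM {a..n} (\<lambda>_. lborel))"
proof -
  have "(\<lambda>y. indicator {y. \<forall>j\<in>{a..n}. t < y j} y :: real) \<in> borel_measurable (PiM {a..n} (\<lambda>_. lborel))"
    unfolding indicator_def by measurable
  moreover have "(\<lambda>y. \<phi> i (splice_path a w y (i - 1)) (splice_path a w y i))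
      \<in> borel_measurable (PiM {a..n} (\<lambda>_. lborel))" if "i \<in> {a..n}" for i
    using that assms by (intro measurable_kernel_comp measurable_splice_path) auto
  ultimately show ?thesis
    unfolding tail_density_def by (intro borel_measurable_times borel_measurable_prod)
qed

lemma tail_density_nonneg: "0 \<le> tail_density \<phi> a n t w y"
  unfolding tail_density_def by (intro mult_nonneg_nonneg prod_nonneg) (auto simp: kernel_nonneg)

lemma nn_integral_kernel_above:
  assumes "2 \<le> i" "0 \<le> p" "t \<le> p"
  shows "(\<integral>\<^sup>+u. ennreal (indicator {t<..} u * \<phi> i p u) \<partial>lborel) = 1"
proof -
  have "(\<integral>\<^sup>+u. ennreal (indicator {t<..} u * \<phi> i p u) \<partial>lborel) = (\<integral>\<^sup>+u. ennreal (\<phi> i p u) \<partial>lborel)"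
    using assms kernel_eq_0[of _ p i] by (intro nn_integral_cong) (auto simp: indicator_def)
  with assms nn_integral_kernel show ?thesis by simp
qed

lemma nn_integral_tail_density:
  assumes "1 \<le> a" "0 \<le> t"
  shows "(\<integral>\<^sup>+y. ennreal (tail_density \<phi> a n t w y) \<partial>PiM {a..n} (\<lambda>_. lborel)) =
    (if a \<le> n then \<integral>\<^sup>+u. ennreal (indicator {t<..} u * \<phi> a (w (a - 1)) u) \<partial>lborel else 1)"
  using assms(1)
proof (induction "Suc n - a" arbitrary: a w)
  case 0
  then have "{a..n} = {}" by auto
  then show ?case by (simp add: tail_density_def space_PiM_empty emeasure_PiM_empty)
next
  case (Suc d)
  interpret product_sigma_finite "\<lambda>_::nat. lborel :: real measure" by standard
  have "a \<le> n" using Suc by auto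
  then have insert: "{a..n} = insert a {Suc a..n}" by auto
  have inner: "(\<integral>\<^sup>+y. ennreal (tail_density \<phi> a n t w (y(a := u))) \<partial>PiM {Suc a..n} (\<lambda>_. lborel))
      = ennreal (indicator {t<..} u * \<phi> a (w (a - 1)) u)" for u
  proof -
    let ?w = "w(a := u)"
    have "(\<integral>\<^sup>+y. ennreal (tail_density \<phi> a n t w (y(a := u))) \<partial>PiM {Suc a..n} (\<lambda>_. lborel))
      = ennreal (indicator {t<..} u * \<phi> a (w (a - 1)) u) *
        (\<integral>\<^sup>+y. ennreal (tail_density \<phi> (Suc a) n t ?w y) \<partial>PiM {Suc a..n} (\<lambda>_. lborel))"
      using measurable_tail_density[of "Suc a"] \<open>a \<le> n\<close> Suc.prems
      by (subst nn_integral_cmult[symmetric])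
        (auto simp: tail_density_upd ennreal_mult kernel_nonneg tail_density_nonneg intro!: nn_integral_cong)
    also have "\<dots> = ennreal (indicator {t<..} u * \<phi> a (w (a - 1)) u)"
    proof (cases "t < u")
      case True
      have "(\<integral>\<^sup>+y. ennreal (tail_density \<phi> (Suc a) n t ?w y) \<partial>PiM {Suc a..n} (\<lambda>_. lborel)) = 1"
        using Suc.hyps(1)[of "Suc a" ?w] Suc.hyps(2) Suc.prems True assms(2)
        by (simp add: nn_integral_kernel_above)
      then show ?thesis by simp
    qed simp
    finally show ?thesis .
  qed
  have "(\<integral>\<^sup>+y. ennreal (tail_density \<phi> a n t w y) \<partial>PiM {a..n} (\<lambda>_. lborel))
     = (\<integral>\<^sup>+u. (\<integral>\<^sup>+y. ennreal (tail_density \<phi> a n t w (y(a := u))) \<partial>PiM {Suc a..n} (\<lambda>_. lborel)) \<partial>lborel)"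
    using measurable_tail_density[OF Suc.prems, of n t w] unfolding insert
    by (intro product_nn_integral_insert_rev) auto
  then show ?case using \<open>a \<le> n\<close> by (simp add: inner)
qed

lemma integral_tail_density:
  assumes "1 \<le> a" "0 \<le> t"
  shows "(LINT y|PiM {a..n} (\<lambda>_. lborel). tail_density \<phi> a n t w y) =
    (if a \<le> n then kernel_survival \<phi> a (w (a - 1)) t else 1)"
  using assms measurable_tail_density[OF assms(1)]
  by (simp add: integral_eq_nn_integral tail_density_nonneg nn_integral_tail_density kernel_survival_def)

lemma integral_tail_density_eq_1:
  assumes "2 \<le> a" "0 \<le> t" "t \<le> w (a - 1)"
  shows "(LINT y|PiM {a..n} (\<lambda>_. lborel). tail_density \<phi> a n t w y) = 1"
  using assms by (simp add: integral_tail_density kernel_survival_def nn_integral_kernel_above)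

end

section \<open>Multivariate hazards of a path density\<close>

locale chain_density = transition_kernels +
  fixes n :: nat and g :: "(nat \<Rightarrow> real) \<Rightarrow> real"
  assumes density_eq: "\<And>z. g z = path_density \<phi> n (z(0 := 0))"
begin

lemma history_initial_segment:
  assumes denom: "hist_denom g n t I x \<noteq> 0" and I: "I \<subseteq> {1..n}" "\<forall>i\<in>I. x i < t"
  shows "\<exists>m\<le>n. I = {1..m} \<and> path_density \<phi> m (x(0 := 0)) \<noteq> 0"
proof -
  obtain y where "indicator {y. \<forall>j\<in>{1..n} - I. t < y j} y * g (\<lambda>i. if i \<in> I then x i else y i) \<noteq> (0::real)"
    using ex_nonzero_if_integral_nonzero denom unfolding hist_denom_def by blast
  moreover define z where "z = (\<lambda>i. if i \<in> I then x i else y i)(0 := 0)"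
  ultimately have y_above: "\<forall>j\<in>{1..n} - I. t < y j" and nonzero: "path_density \<phi> n z \<noteq> 0"
    by (auto simp: density_eq indicator_def split: if_splits)
  (* unrecorded coordinates exceed t > recorded ones, and a path of positive density increases *)
  have less: "i < j" if "i \<in> I" "j \<in> {1..n} - I" for i j
  proof (rule ccontr)
    assume "\<not> i < j"
    with that have "j < i" by (cases "i = j") auto
    with that I have "z j < z i" by (intro path_density_nonzero_increasing[OF nonzero]) auto
    with that I y_above show False by (force simp: z_def)
  qed
  from I(1) less obtain m where "m \<le> n" "I = {1..m}"
    by (rule initial_segment_if_less_complement)
  then have "z = splice_path (Suc m) (x(0 := 0)) y" by (auto simp: z_def splice_path_def)
  with nonzero path_density_splice_path[OF \<open>m \<le> n\<close>] have "path_density \<phi> m (x(0 := 0)) \<noteq> 0"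
    by auto
  with \<open>m \<le> n\<close> \<open>I = {1..m}\<close> show ?thesis by blast
qed

lemma hist_denom_initial_segment:
  assumes I: "I = {1..m}" and "m \<le> n" "0 \<le> t"
  shows "hist_denom g n t I x = path_density \<phi> m (x(0 := 0)) *
           (if m < n then kernel_survival \<phi> (Suc m) ((x(0 := 0)) m) t else 1)"
proof -
  let ?x = "x(0 := 0)"
  have "{1..n} - I = {Suc m..n}" using I by auto
  moreover have "indicator {y. \<forall>j\<in>{Suc m..n}. t < y j} y * g (\<lambda>i. if i \<in> I then x i else y i) =
      path_density \<phi> m ?x * tail_density \<phi> (Suc m) n t ?x y" for y
  proof -
    have "(\<lambda>i. if i \<in> I then x i else y i)(0 := 0) = splice_path (Suc m) ?x y"
      using I by (auto simp: splice_path_def)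
    then show ?thesis
      using path_density_splice_path[OF \<open>m \<le> n\<close>] by (simp add: density_eq tail_density_def)
  qed
  ultimately have "hist_denom g n t I x =
      (LINT y|PiM {Suc m..n} (\<lambda>_. lborel). path_density \<phi> m ?x * tail_density \<phi> (Suc m) n t ?x y)"
    unfolding hist_denom_def by simp
  also have "\<dots> = path_density \<phi> m ?x * (if m < n then kernel_survival \<phi> (Suc m) (?x m) t else 1)"
    using \<open>0 \<le> t\<close> by (simp add: integral_tail_density)
  finally show ?thesis .
qed

lemma hist_numer_Suc:
  assumes I: "I = {1..m}" and "m < n" "0 \<le> t"
  shows "hist_numer g n t I x (Suc m) = path_density \<phi> m (x(0 := 0)) * \<phi> (Suc m) ((x(0 := 0)) m) t"
proof -
  let ?x = "x(0 := 0)"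
  let ?w = "?x(Suc m := t)"
  have "{1..n} - I - {Suc m} = {Suc (Suc m)..n}" using I by auto
  moreover have "indicator {y. \<forall>j\<in>{Suc (Suc m)..n}. t < y j} y *
        g (\<lambda>i. if i \<in> I then x i else if i = Suc m then t else y i) =
      path_density \<phi> m ?x * \<phi> (Suc m) (?x m) t * tail_density \<phi> (Suc (Suc m)) n t ?w y" for y
  proof -
    have "(\<lambda>i. if i \<in> I then x i else if i = Suc m then t else y i)(0 := 0) = splice_path (Suc (Suc m)) ?w y"
      using I by (auto simp: splice_path_def)
    moreover have "path_density \<phi> (Suc m) ?w = path_density \<phi> m ?x * \<phi> (Suc m) (?x m) t"
      by (simp add: path_density_Suc path_density_cong[of m ?w ?x])
    ultimately show ?thesis
      using path_density_splice_path[of "Suc m" n \<phi> ?w y] \<open>m < n\<close>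
      by (simp add: density_eq tail_density_def)
  qed
  ultimately have "hist_numer g n t I x (Suc m) = (LINT y|PiM {Suc (Suc m)..n} (\<lambda>_. lborel).
      path_density \<phi> m ?x * \<phi> (Suc m) (?x m) t * tail_density \<phi> (Suc (Suc m)) n t ?w y)"
    unfolding hist_numer_def by simp
  also have "\<dots> = path_density \<phi> m ?x * \<phi> (Suc m) (?x m) t"
    using \<open>0 \<le> t\<close> by (simp add: integral_tail_density_eq_1)
  finally show ?thesis .
qed

lemma hist_numer_eq_0:
  assumes I: "I = {1..m}" and "Suc m < k" "k \<le> n"
  shows "hist_numer g n t I x k = 0"
proof -
  have "g (\<lambda>i. if i \<in> I then x i else if i = k then t else y i) = 0" if "t < y (k - 1)" for y
  proof -
    let ?z = "(\<lambda>i. if i \<in> I then x i else if i = k then t else y i)(0 := 0)"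
    have "\<phi> k (?z (k - 1)) (?z k) = 0" using that assms by (intro kernel_eq_0) auto
    then have "path_density \<phi> n ?z = 0"
      unfolding path_density_def using assms by (intro prod_zero bexI[of _ k]) auto
    then show ?thesis by (simp add: density_eq)
  qed
  moreover have "k - 1 \<in> {1..n} - I - {k}" using assms by auto
  ultimately have integrand_eq_0: "indicator {y. \<forall>j\<in>{1..n} - I - {k}. t < y j} y *
      g (\<lambda>i. if i \<in> I then x i else if i = k then t else y i) = 0" for y
    by (cases "t < y (k - 1)") (auto simp: indicator_def)
  show ?thesis unfolding hist_numer_def integrand_eq_0 by simp
qed

lemma mv_hazard_chain_density:
  assumes "0 \<le> t" "history g n t I x"
  shows "\<exists>m\<le>n. I = {1..m} \<and> (\<forall>k\<in>{1..n} - I.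
           mv_hazard g n t I x k = (if k = Suc m then kernel_hazard \<phi> k ((x(0 := 0)) m) t else 0))"
proof -
  from assms(2) have "I \<subseteq> {1..n}" "\<forall>i\<in>I. x i < t" "hist_denom g n t I x \<noteq> 0"
    by (auto simp: history_def)
  then obtain m where "m \<le> n" and I: "I = {1..m}" and nonzero: "path_density \<phi> m (x(0 := 0)) \<noteq> 0"
    using history_initial_segment by blast
  have "mv_hazard g n t I x k = (if k = Suc m then kernel_hazard \<phi> k ((x(0 := 0)) m) t else 0)"
    if "k \<in> {1..n} - I" for k
  proof -
    from that I have "Suc m \<le> k" "k \<le> n" by auto
    then consider "k = Suc m" "m < n" | "Suc m < k" by linarith
    then show ?thesis
    proof cases
      case 1
      with nonzero show ?thesis
        using hist_numer_Suc[OF I] hist_denom_initial_segment[OF I] \<open>0 \<le> t\<close>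
        by (simp add: mv_hazard_def kernel_hazard_def)
    next
      case 2
      with hist_numer_eq_0[OF I] \<open>k \<le> n\<close> show ?thesis by (simp add: mv_hazard_def)
    qed
  qed
  with \<open>m \<le> n\<close> I show ?thesis by blast
qed

end

lemma dyn_hr_le_chain_densities:
  assumes X: "chain_density \<phi>X n gX" and Y: "chain_density \<phi>Y n gY"
    and same_start: "\<And>q. \<phi>X 1 0 q = \<phi>Y 1 0 q"
    and hazard_le: "\<And>k a b t. 2 \<le> k \<Longrightarrow> 0 < a \<Longrightarrow> a \<le> b \<Longrightarrow> b < t \<Longrightarrow>
                      kernel_hazard \<phi>Y k b t \<le> kernel_hazard \<phi>X k a t"
  shows "dyn_hr_le n gX gY"
  unfolding dyn_hr_le_def
proof (intro allI impI ballI)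
  fix t :: real and I J x y k
  assume "0 \<le> t"
    and H: "I \<inter> J = {} \<and> history gX n t (I \<union> J) x \<and> history gY n t I y \<and>
      (\<forall>i\<in>I. 0 \<le> x i \<and> x i \<le> y i \<and> y i \<le> t) \<and> (\<forall>j\<in>J. 0 \<le> x j \<and> x j \<le> t)"
    and k: "k \<in> {1..n} - (I \<union> J)"
  obtain m where IJ: "I \<union> J = {1..m}" and hazard_X: "\<forall>k\<in>{1..n} - (I \<union> J).
      mv_hazard gX n t (I \<union> J) x k = (if k = Suc m then kernel_hazard \<phi>X k ((x(0 := 0)) m) t else 0)"
    using chain_density.mv_hazard_chain_density[OF X \<open>0 \<le> t\<close>] H by blast
  obtain p where I: "I = {1..p}" and hazard_Y: "\<forall>k\<in>{1..n} - I.
      mv_hazard gY n t I y k = (if k = Suc p then kernel_hazard \<phi>Y k ((y(0 := 0)) p) t else 0)"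
    using chain_density.mv_hazard_chain_density[OF Y \<open>0 \<le> t\<close>] H by blast
  have X_nonneg: "0 \<le> mv_hazard gX n t (I \<union> J) x k"
    using hazard_X k transition_kernels.kernel_hazard_nonneg[OF chain_density.axioms(1)[OF X]] by simp
  show "mv_hazard gY n t I y k \<le> mv_hazard gX n t (I \<union> J) x k"
  proof (cases "k = Suc p")
    case False
    with hazard_Y k X_nonneg show ?thesis by simp
  next
    case True
    have "p \<le> m" using I IJ by (cases "p = 0") auto
    with True k IJ have "p = m" by auto
    show ?thesis
    proof (cases "m = 0")
      case True
      with \<open>p = m\<close> \<open>k = Suc p\<close> hazard_X hazard_Y k show ?thesis
        by (simp add: kernel_hazard_def kernel_survival_def same_start[unfolded One_nat_def])
    next
      case False
      with I \<open>p = m\<close> have "m \<in> I" by simp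
      with H have "0 < x m" "x m \<le> y m" "y m < t" by (auto simp: history_def)
      with False \<open>p = m\<close> \<open>k = Suc p\<close> hazard_X hazard_Y k show ?thesis
        by (simp add: hazard_le)
    qed
  qed
qed

section \<open>The relevation and replacement kernels\<close>

lemma nn_integral_survival:
  assumes "is_lifetime_density g"
  shows "(\<integral>\<^sup>+u. ennreal (indicator {c<..} u * g u) \<partial>lborel) = ennreal (survival g c)"
proof -
  have "integrable lborel g" "g \<in> borel_measurable lborel" "\<And>x. 0 \<le> g x"
    using assms unfolding is_lifetime_density_def by auto
  then show ?thesis unfolding survival_def set_lebesgue_integral_def real_scaleR_def
    by (intro nn_integral_eq_integral)
      (auto simp: mult.commute[of "indicator _ _"] intro!: integrable_real_mult_indicator)
qed

lemma survival_nonneg: "is_lifetime_density g \<Longrightarrow> 0 \<le> survival g c"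
  unfolding survival_def set_lebesgue_integral_def is_lifetime_density_def
  by (intro integral_nonneg_AE) (auto simp: indicator_def)

lemma survival_antimono:
  assumes "is_lifetime_density g" "c \<le> e"
  shows "survival g e \<le> survival g c"
proof -
  have "ennreal (survival g e) \<le> ennreal (survival g c)"
    using assms unfolding nn_integral_survival[OF assms(1), symmetric] is_lifetime_density_def
    by (intro nn_integral_mono) (auto simp: indicator_def)
  with survival_nonneg[OF assms(1)] show ?thesis by simp
qed

lemma borel_measurable_survival:
  assumes "is_lifetime_density g"
  shows "survival g \<in> borel_measurable borel"
proof -
  have "(\<lambda>c. - survival g c) \<in> borel_measurable borel"
    using survival_antimono[OF assms] by (intro borel_measurable_mono) (auto simp: mono_def)
  from borel_measurable_uminus[OF this] show ?thesis by simp
qed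

lemma survival_0:
  assumes "is_lifetime_density g"
  shows "survival g 0 = 1"
proof -
  have "survival g 0 = (LINT x|lborel. g x)"
    unfolding survival_def set_lebesgue_integral_def
    using assms AE_lborel_singleton[of 0] unfolding is_lifetime_density_def
    by (intro integral_cong_AE) (auto simp: indicator_def elim!: eventually_mono)
  with assms show ?thesis by (simp add: is_lifetime_density_def)
qed

(* The guard 1 \<le> i avoids f 0, which is unconstrained. *)
definition relevation_kernel :: "(nat \<Rightarrow> real \<Rightarrow> real) \<Rightarrow> nat \<Rightarrow> real \<Rightarrow> real \<Rightarrow> real" where
  "relevation_kernel f i p q = (if 1 \<le> i \<and> p < q then f i q / survival (f i) p else 0)"

definition replacement_kernel :: "(nat \<Rightarrow> real \<Rightarrow> real) \<Rightarrow> nat \<Rightarrow> real \<Rightarrow> real \<Rightarrow> real" where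
  "replacement_kernel f i p q = (if 1 \<le> i \<and> p < q then f i (q - p) else 0)"

context
  fixes f :: "nat \<Rightarrow> real \<Rightarrow> real"
  assumes dens: "\<And>n. n \<ge> 1 \<Longrightarrow> is_lifetime_density (f n)"
    and surv_pos: "\<And>n t. n \<ge> 1 \<Longrightarrow> t \<ge> 0 \<Longrightarrow> survival (f n) t > 0"
begin

lemma borel_measurable_density: "1 \<le> i \<Longrightarrow> f i \<in> borel_measurable borel"
  using dens by (simp add: is_lifetime_density_def)

lemma density_nonneg: "1 \<le> i \<Longrightarrow> 0 \<le> f i x"
  using dens by (simp add: is_lifetime_density_def)

lemma nn_integral_relevation_kernel_above:
  assumes "1 \<le> i" "0 \<le> p" "p \<le> t"
  shows "(\<integral>\<^sup>+u. ennreal (indicator {t<..} u * relevation_kernel f i p u) \<partial>lborel) =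
           ennreal (survival (f i) t / survival (f i) p)"
proof -
  have S: "0 < survival (f i) p" using assms by (simp add: surv_pos)
  have "(\<integral>\<^sup>+u. ennreal (indicator {t<..} u * relevation_kernel f i p u) \<partial>lborel) =
      (\<integral>\<^sup>+u. ennreal (indicator {t<..} u * f i u) * ennreal (1 / survival (f i) p) \<partial>lborel)"
    using assms S by (intro nn_integral_cong)
      (auto simp: relevation_kernel_def indicator_def ennreal_mult'[symmetric] density_nonneg)
  also have "\<dots> = ennreal (survival (f i) t) * ennreal (1 / survival (f i) p)"
    using assms borel_measurable_density[of i]
    by (subst nn_integral_multc) (auto simp: nn_integral_survival dens)
  also have "\<dots> = ennreal (survival (f i) t / survival (f i) p)"
    using assms by (simp add: ennreal_mult'[symmetric] survival_nonneg dens)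
  finally show ?thesis .
qed

lemma nn_integral_replacement_kernel_above:
  assumes "1 \<le> i" "p \<le> t"
  shows "(\<integral>\<^sup>+u. ennreal (indicator {t<..} u * replacement_kernel f i p u) \<partial>lborel) =
           ennreal (survival (f i) (t - p))"
proof -
  let ?h = "\<lambda>v. ennreal (indicator {t - p<..} v * f i v)"
  have [measurable]: "f i \<in> borel_measurable borel" using assms by (simp add: borel_measurable_density)
  have "(\<integral>\<^sup>+u. ennreal (indicator {t<..} u * replacement_kernel f i p u) \<partial>lborel) =
      (\<integral>\<^sup>+u. ?h (- p + 1 * u) \<partial>lborel)"
    using assms by (intro nn_integral_cong) (auto simp: replacement_kernel_def indicator_def)
  also have "\<dots> = (\<integral>\<^sup>+v. ?h v \<partial>lborel)"
    using nn_integral_real_affine[of ?h 1 "- p"] by simp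
  also have "\<dots> = ennreal (survival (f i) (t - p))"
    using assms by (simp add: nn_integral_survival dens)
  finally show ?thesis .
qed

lemma transition_kernels_relevation: "transition_kernels (relevation_kernel f)"
proof
  fix i
  show "(\<lambda>p. relevation_kernel f i (fst p) (snd p)) \<in> borel_measurable borel"
  proof (cases "1 \<le> i")
    case True
    then have [measurable]: "f i \<in> borel_measurable borel" "survival (f i) \<in> borel_measurable borel"
      by (simp_all add: borel_measurable_density borel_measurable_survival dens)
    have "(\<lambda>p::real \<times> real. if fst p < snd p then f i (snd p) / survival (f i) (fst p) else 0)
        \<in> borel_measurable (borel \<Otimes>\<^sub>M borel)"
      by measurable
    with True show ?thesis by (simp add: relevation_kernel_def borel_prod)
  qed (simp add: relevation_kernel_def)
next
  fix i p q
  show "0 \<le> relevation_kernel f i p q"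
    by (simp add: relevation_kernel_def density_nonneg survival_nonneg dens)
  show "q \<le> p \<Longrightarrow> relevation_kernel f i p q = 0"
    by (simp add: relevation_kernel_def)
next
  fix i :: nat and p :: real
  assume "2 \<le> i" "0 \<le> p"
  then have "(\<integral>\<^sup>+q. ennreal (relevation_kernel f i p q) \<partial>lborel) =
      (\<integral>\<^sup>+q. ennreal (indicator {p<..} q * relevation_kernel f i p q) \<partial>lborel)"
    by (intro nn_integral_cong) (simp add: relevation_kernel_def indicator_def)
  also have "\<dots> = 1"
    using \<open>2 \<le> i\<close> \<open>0 \<le> p\<close> surv_pos[of i p]
    by (simp add: nn_integral_relevation_kernel_above)
  finally show "(\<integral>\<^sup>+q. ennreal (relevation_kernel f i p q) \<partial>lborel) = 1" .
qed

lemma transition_kernels_replacement: "transition_kernels (replacement_kernel f)"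
proof
  fix i
  show "(\<lambda>p. replacement_kernel f i (fst p) (snd p)) \<in> borel_measurable borel"
  proof (cases "1 \<le> i")
    case True
    then have [measurable]: "f i \<in> borel_measurable borel"
      by (simp add: borel_measurable_density)
    have "(\<lambda>p::real \<times> real. if fst p < snd p then f i (snd p - fst p) else 0)
        \<in> borel_measurable (borel \<Otimes>\<^sub>M borel)"
      by measurable
    with True show ?thesis by (simp add: replacement_kernel_def borel_prod)
  qed (simp add: replacement_kernel_def)
next
  fix i p q
  show "0 \<le> replacement_kernel f i p q"
    by (simp add: replacement_kernel_def density_nonneg)
  show "q \<le> p \<Longrightarrow> replacement_kernel f i p q = 0"
    by (simp add: replacement_kernel_def)
next
  fix i :: nat and p :: real
  assume "2 \<le> i" "0 \<le> p"
  then have "(\<integral>\<^sup>+q. ennreal (replacement_kernel f i p q) \<partial>lborel) =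
      (\<integral>\<^sup>+q. ennreal (indicator {p<..} q * replacement_kernel f i p q) \<partial>lborel)"
    by (intro nn_integral_cong) (simp add: replacement_kernel_def indicator_def)
  also have "\<dots> = 1"
    using \<open>2 \<le> i\<close> by (simp add: nn_integral_replacement_kernel_above survival_0 dens)
  finally show "(\<integral>\<^sup>+q. ennreal (replacement_kernel f i p q) \<partial>lborel) = 1" .
qed

lemma kernel_hazard_relevation:
  assumes "1 \<le> k" "0 \<le> a" "a < t"
  shows "kernel_hazard (relevation_kernel f) k a t = f k t / survival (f k) t"
proof -
  have "0 < survival (f k) a" "0 < survival (f k) t" using assms by (simp_all add: surv_pos)
  moreover from this assms have
    "kernel_survival (relevation_kernel f) k a t = survival (f k) t / survival (f k) a"
    by (simp add: kernel_survival_def nn_integral_relevation_kernel_above)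
  ultimately show ?thesis
    using assms by (simp add: kernel_hazard_def relevation_kernel_def)
qed

lemma kernel_hazard_replacement:
  assumes "1 \<le> k" "a < t"
  shows "kernel_hazard (replacement_kernel f) k a t = f k (t - a) / survival (f k) (t - a)"
proof -
  from assms have "kernel_survival (replacement_kernel f) k a t = survival (f k) (t - a)"
    by (simp add: kernel_survival_def nn_integral_replacement_kernel_above survival_nonneg dens)
  with assms show ?thesis by (simp add: kernel_hazard_def replacement_kernel_def)
qed

lemma relevation_kernel_1_0: "relevation_kernel f 1 0 = replacement_kernel f 1 0"
  by (auto simp: relevation_kernel_def replacement_kernel_def survival_0 dens)


lemma chain_density_relevation:
  assumes "1 \<le> n"
  shows "chain_density (relevation_kernel f) n (relevation_density f n)"
proof -
  have "relevation_density f n z = path_density (relevation_kernel f) n (z(0 := 0))" for z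
    using path_density_from_0[OF assms, of "relevation_kernel f" "\<lambda>i p q. f i q / survival (f i) p"]
    by (simp add: relevation_kernel_def relevation_density_def survival_0 dens)
  with transition_kernels_relevation show ?thesis
    by (simp add: chain_density_def chain_density_axioms_def)
qed

lemma chain_density_replacement:
  assumes "1 \<le> n"
  shows "chain_density (replacement_kernel f) n (replacement_density f n)"
proof -
  have "replacement_density f n z = path_density (replacement_kernel f) n (z(0 := 0))" for z
    using path_density_from_0[OF assms, of "replacement_kernel f" "\<lambda>i p q. f i (q - p)"]
    by (simp add: replacement_kernel_def replacement_density_def)
  with transition_kernels_replacement show ?thesis
    by (simp add: chain_density_def chain_density_axioms_def)
qed

lemma dyn_hr_le_relevation_replacement:
  assumes IFR: "\<forall>i\<ge>1. IFR (f i)" and "1 \<le> n"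
  shows "dyn_hr_le n (relevation_density f n) (replacement_density f n)"
proof (rule dyn_hr_le_chain_densities[OF chain_density_relevation[OF \<open>1 \<le> n\<close>]
      chain_density_replacement[OF \<open>1 \<le> n\<close>]])
  show "relevation_kernel f 1 0 q = replacement_kernel f 1 0 q" for q
    by (rule fun_cong[OF relevation_kernel_1_0])
  fix k :: nat and a b t :: real
  assume "2 \<le> k" "0 < a" "a \<le> b" "b < t"
  from IFR \<open>2 \<le> k\<close> have "mono_on {0..} (\<lambda>t. f k t / survival (f k) t)"
    by (simp add: IFR_def)
  then have "f k (t - b) / survival (f k) (t - b) \<le> f k t / survival (f k) t"
    by (rule mono_onD) (use \<open>0 < a\<close> \<open>a \<le> b\<close> \<open>b < t\<close> in auto)
  with \<open>2 \<le> k\<close> \<open>0 < a\<close> \<open>a \<le> b\<close> \<open>b < t\<close>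
  show "kernel_hazard (replacement_kernel f) k b t \<le> kernel_hazard (relevation_kernel f) k a t"
    by (simp add: kernel_hazard_relevation kernel_hazard_replacement)
qed

lemma dyn_hr_le_replacement_relevation:
  assumes DFR: "\<forall>i\<ge>1. DFR (f i)" and "1 \<le> n"
  shows "dyn_hr_le n (replacement_density f n) (relevation_density f n)"
proof (rule dyn_hr_le_chain_densities[OF chain_density_replacement[OF \<open>1 \<le> n\<close>]
      chain_density_relevation[OF \<open>1 \<le> n\<close>]])
  show "replacement_kernel f 1 0 q = relevation_kernel f 1 0 q" for q
    by (rule fun_cong[OF relevation_kernel_1_0[symmetric]])
  fix k :: nat and a b t :: real
  assume "2 \<le> k" "0 < a" "a \<le> b" "b < t"
  from DFR \<open>2 \<le> k\<close> have "antimono_on {0..} (\<lambda>t. f k t / survival (f k) t)"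
    by (simp add: DFR_def)
  then have "f k t / survival (f k) t \<le> f k (t - a) / survival (f k) (t - a)"
    by (rule monotone_onD) (use \<open>0 < a\<close> \<open>a \<le> b\<close> \<open>b < t\<close> in auto)
  with \<open>2 \<le> k\<close> \<open>0 < a\<close> \<open>a \<le> b\<close> \<open>b < t\<close>
  show "kernel_hazard (relevation_kernel f) k b t \<le> kernel_hazard (replacement_kernel f) k a t"
    by (simp add: kernel_hazard_relevation kernel_hazard_replacement)
qed

end

theorem theorem3p3:
  fixes f :: "nat \<Rightarrow> real \<Rightarrow> real"
  assumes dens: "\<And>n. n \<ge> 1 \<Longrightarrow> is_lifetime_density (f n)"
    and surv_pos: "\<And>n t. n \<ge> 1 \<Longrightarrow> t \<ge> 0 \<Longrightarrow> survival (f n) t > 0"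
  shows "((\<forall>i\<ge>1. IFR (f i)) \<longrightarrow>
           (\<forall>n\<ge>1. dyn_hr_le n (relevation_density f n) (replacement_density f n)))
       \<and> ((\<forall>i\<ge>1. DFR (f i)) \<longrightarrow>
           (\<forall>n\<ge>1. dyn_hr_le n (replacement_density f n) (relevation_density f n)))"
  using dyn_hr_le_relevation_replacement[where f = f, OF dens surv_pos]
    dyn_hr_le_replacement_relevation[where f = f, OF dens surv_pos]
  by blast

end
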